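(* Let $(\mathbf X_1,\mathbf Y_1)$ and $(\mathbf X_2,\mathbf Y_2)$ be general correlated sources, both uniformly integrable, and let $(\mathbf X,\mathbf Y)$ be their mixture $P_{X^nY^n}=\alpha_1P_{X_1^nY_1^n}+\alpha_2P_{X_2^nY_2^n}$ with $\alpha_1,\alpha_2>0$, $\alpha_1+\alpha_2=1$. Then \[\overline H_s(\mathbf X|\mathbf Y)\le\lim_{\varepsilon\downarrow0}\limsup_{n\to\infty}\frac1n\sum_{x^n\in\mathcal X^n}P_{X^n}(x^n)\Big[\max_{i=1,2}\overline h_i^\varepsilon(x^n)\Big].\]
   Context: A general correlated source $\{(X^n,Y^n)\}_{n\ge1}$ is an arbitrary sequence of pairs of random variables on $\mathcal X^n\times\mathcal Y^n$, $\mathcal X,\mathcal Y$ finite or countably infinite (no structural assumptions; marginal probabilities positive). Logs base 2. A source is uniformly integrable if $Z_n=\frac1n\log\frac1{P_{X^n|Y^n}(X^n|Y^n)}$ satisfies $\lim_{u\to\infty}\sup_n\sum_{z:|z|\ge u}P_{Z_n}(z)|z|=0$. For a source with distributions $P_{X^nY^n}$, $x^n$ and $\varepsilon\in(0,1]$: $\overline h^\varepsilon(x^n|P_{X^nY^n})=\inf\{a\in\mathbb R:\sum_{y^n:\log(1/P_{X^n|Y^n}(x^n|y^n))>a}P_{Y^n|X^n}(y^n|x^n)\le\varepsilon\}$; $\overline h_i^\varepsilon(x^n)=\overline h^\varepsilon(x^n|P_{X_i^nY_i^n})$; $\overline H_s^\varepsilon(X^n|Y^n)=\sum_{x^n}P_{X^n}(x^n)\overline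 h^\varepsilon(x^n|P_{X^nY^n})$; $\overline H_s(\mathbf X|\mathbf Y)=\lim_{\varepsilon\downarrow0}\limsup_n\frac1n\overline H_s^\varepsilon(X^n|Y^n)$. *)

theory Defs
  imports "HOL-Probability.Probability"
begin

type_synonym ('a, 'b) source = "nat \<Rightarrow> ('a list \<times> 'b list) pmf"

definition is_source :: "('a::countable, 'b::countable) source \<Rightarrow> bool" where
  "is_source P \<longleftrightarrow>
     (\<forall>n. set_pmf (P n) \<subseteq> {(x, y). length x = n \<and> length y = n}) \<and>
     (\<forall>n x. length x = n \<longrightarrow> pmf (map_pmf fst (P n)) x > 0) \<and>
     (\<forall>n y. length y = n \<longrightarrow> pmf (map_pmf snd (P n)) y > 0)"

definition pX :: "('a, 'b) source \<Rightarrow> nat \<Rightarrow> 'a list \<Rightarrow> real" where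
  "pX P n x = pmf (map_pmf fst (P n)) x"

definition pY :: "('a, 'b) source \<Rightarrow> nat \<Rightarrow> 'b list \<Rightarrow> real" where
  "pY P n y = pmf (map_pmf snd (P n)) y"

definition condXY :: "('a, 'b) source \<Rightarrow> nat \<Rightarrow> 'a list \<Rightarrow> 'b list \<Rightarrow> real" where
  "condXY P n x y = pmf (P n) (x, y) / pY P n y"

definition condYX :: "('a, 'b) source \<Rightarrow> nat \<Rightarrow> 'b list \<Rightarrow> 'a list \<Rightarrow> real" where
  "condYX P n y x = pmf (P n) (x, y) / pX P n x"

definition Zn :: "('a, 'b) source \<Rightarrow> nat \<Rightarrow> 'a list \<times> 'b list \<Rightarrow> real" where
  "Zn P n xy = (1 / real n) * log 2 (1 / condXY P n (fst xy) (snd xy))"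

definition unif_integrable :: "('a, 'b) source \<Rightarrow> bool" where
  "unif_integrable P \<longleftrightarrow>
     ((\<lambda>u::real. SUP n\<in>{1..}. \<integral>\<^sup>+ z. (if \<bar>z\<bar> \<ge> u then ennreal \<bar>z\<bar> else 0)
                                   \<partial>(measure_pmf (map_pmf (Zn P n) (P n))))
       \<longlongrightarrow> 0) at_top"

definition hbar :: "real \<Rightarrow> ('a, 'b) source \<Rightarrow> nat \<Rightarrow> 'a list \<Rightarrow> real" where
  "hbar \<epsilon> P n x = Inf {a::real.
      (\<Sum>\<^sub>\<infinity> y \<in> {y. log 2 (1 / condXY P n x y) > a}. condYX P n y x) \<le> \<epsilon>}"

definition Hs_eps :: "real \<Rightarrow> ('a, 'b) source \<Rightarrow> nat \<Rightarrow> ennreal" where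
  "Hs_eps \<epsilon> P n = (\<Sum>\<^sub>\<infinity> x. ennreal (pX P n x) * ennreal (hbar \<epsilon> P n x))"

definition Hs_bar :: "('a, 'b) source \<Rightarrow> ennreal" where
  "Hs_bar P = Lim (at_right 0) (\<lambda>\<epsilon>::real. limsup (\<lambda>n. Hs_eps \<epsilon> P n / of_nat n))"

definition Hmax_eps ::
  "real \<Rightarrow> ('a, 'b) source \<Rightarrow> ('a, 'b) source \<Rightarrow> ('a, 'b) source \<Rightarrow> nat \<Rightarrow> ennreal" where
  "Hmax_eps \<epsilon> P P1 P2 n =
     (\<Sum>\<^sub>\<infinity> x. ennreal (pX P n x) * ennreal (max (hbar \<epsilon> P1 n x) (hbar \<epsilon> P2 n x)))"

end

theory Submission
  imports Defs
begin

text \<open>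
  Write \<open>L(x,y) = log (P\<^sub>Y(y) / P\<^sub>X\<^sub>Y(x,y))\<close> for the conditional information of the mixture
  and \<open>L\<^sub>i\<close> for that of its components. Since \<open>P \<ge> \<alpha>\<^sub>i P\<^sub>i\<close>, we have
  \<open>L \<le> L\<^sub>i + log (P\<^sub>Y / (\<alpha>\<^sub>i P\<^sub>Y\<^sub>i))\<close>, and the correction term exceeds \<open>c\<close> only on the set where
  \<open>P\<^sub>Y > 2\<^sup>c \<alpha>\<^sub>i P\<^sub>Y\<^sub>i\<close>, which has \<open>P\<^sub>Y\<^sub>i\<close>-probability at most \<open>2\<^sup>-\<^sup>c / \<alpha>\<^sub>i\<close>. On the words \<open>x\<close>
  for which these exceptional sets use at most half of the budget \<open>\<epsilon>\<close>, the \<open>\<epsilon>\<close>-quantile of \<open>L\<close>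
  is therefore at most the larger of the \<open>\<epsilon>/2\<close>-quantiles of the \<open>L\<^sub>i\<close>, plus \<open>c + 1\<close>. The
  remaining words have probability \<open>O(2\<^sup>-\<^sup>c / \<epsilon>)\<close>; there Markov's inequality bounds the quantile
  by the conditional mean of \<open>L\<close>, and uniform integrability makes the contribution of such small
  sets to \<open>H\<^sub>s\<^sup>\<epsilon> / n\<close> negligible. With \<open>c = n\<gamma>\<close> the cost is \<open>\<gamma>\<close> per letter, which vanishes
  as \<open>\<gamma> \<rightarrow> 0\<close>, and the loss of \<open>\<epsilon>/2\<close> against \<open>\<epsilon>\<close> disappears in the limit \<open>\<epsilon> \<down> 0\<close>.
\<close>

lemma ennreal_add_le: "ennreal (a + b) \<le> ennreal a + ennreal b"
  by (cases "a \<ge> 0"; cases "b \<ge> 0")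
    (auto simp: ennreal_neg intro: ennreal_leI add_increasing add_increasing2)

lemma infsum_eq_nn_integral:
  fixes g :: "'a::countable \<Rightarrow> ennreal"
  shows "infsum g UNIV = (\<integral>\<^sup>+ x. g x \<partial>count_space UNIV)"
proof -
  have sum_eq: "sum g F = (\<integral>\<^sup>+ x. g x * indicator F x \<partial>count_space UNIV)" if "finite F" for F
    using that by (simp add: nn_integral_count_space_finite flip: nn_integral_count_space_indicator)
  have infsum_eq: "infsum g UNIV = (SUP F\<in>{F. finite F \<and> F \<subseteq> UNIV}. sum g F)"
    by (rule nonneg_infsum_complete) simp
  show ?thesis
  proof (rule antisym)
    show "infsum g UNIV \<le> (\<integral>\<^sup>+ x. g x \<partial>count_space UNIV)"
      unfolding infsum_eq
      by (intro SUP_least) (auto simp: sum_eq indicator_def intro!: nn_integral_mono)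
  next
    define A :: "nat \<Rightarrow> 'a set" where "A k = {x. to_nat x < k}" for k
    have "finite (A k)" for k
      using finite_vimageI[of "{..<k}" to_nat] by (simp add: A_def vimage_def)
    have "incseq (\<lambda>k x. g x * indicator (A k) x)"
      by (intro monoI le_funI mult_left_mono) (auto simp: A_def indicator_def)
    moreover have "(SUP k. g x * indicator (A k) x) = g x" for x
    proof (rule antisym)
      have "g x = g x * indicator (A (Suc (to_nat x))) x" by (simp add: A_def)
      then show "g x \<le> (SUP k. g x * indicator (A k) x)" by (metis SUP_upper UNIV_I)
    qed (auto simp: indicator_def intro: SUP_least)
    ultimately have "(\<integral>\<^sup>+ x. g x \<partial>count_space UNIV) = (SUP k. sum g (A k))"
      using nn_integral_monotone_convergence_SUP[of "\<lambda>k x. g x * indicator (A k) x" "count_space UNIV"]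
      by (simp add: sum_eq \<open>\<And>k. finite (A k)\<close>)
    also have "\<dots> \<le> infsum g UNIV"
      unfolding infsum_eq by (intro SUP_least SUP_upper) (simp add: \<open>\<And>k. finite (A k)\<close>)
    finally show "(\<integral>\<^sup>+ x. g x \<partial>count_space UNIV) \<le> infsum g UNIV" .
  qed
qed

section \<open>Information quantiles of a joint pmf\<close>

definition marg_fst :: "('x \<times> 'y) pmf \<Rightarrow> 'x \<Rightarrow> real" where
  "marg_fst r x = pmf (map_pmf fst r) x"

definition marg_snd :: "('x \<times> 'y) pmf \<Rightarrow> 'y \<Rightarrow> real" where
  "marg_snd r y = pmf (map_pmf snd r) y"

definition cond_info :: "('x \<times> 'y) pmf \<Rightarrow> 'x \<Rightarrow> 'y \<Rightarrow> real" where
  "cond_info r x y = log 2 (marg_snd r y / pmf r (x, y))"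

definition info_tail :: "('x \<times> 'y) pmf \<Rightarrow> 'x \<Rightarrow> real \<Rightarrow> real" where
  "info_tail r x a = measure r {z. fst z = x \<and> cond_info r x (snd z) > a}"

text \<open>For \<open>P\<^sub>X(x) = 0\<close> the quantile is junk (an infimum over all reals); it only ever
  occurs multiplied by \<open>P\<^sub>X(x)\<close>.\<close>

definition info_quantile :: "real \<Rightarrow> ('x \<times> 'y) pmf \<Rightarrow> 'x \<Rightarrow> real" where
  "info_quantile \<epsilon> r x = Inf {a. info_tail r x a / marg_fst r x \<le> \<epsilon>}"

lemma marg_fst_nonneg [simp]: "marg_fst r x \<ge> 0"
  by (simp add: marg_fst_def)

lemma marg_fst_eq_measure: "marg_fst r x = measure r {z. fst z = x}"
  by (simp add: marg_fst_def pmf_map vimage_def)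

lemma marg_snd_eq_measure: "marg_snd r y = measure r {z. snd z = y}"
  by (simp add: marg_snd_def pmf_map vimage_def)

lemma pmf_le_marg_snd: "pmf r (x, y) \<le> marg_snd r y"
proof -
  have "pmf r (x, y) = measure r {(x, y)}" by (simp add: measure_pmf_single)
  also have "\<dots> \<le> measure r {z. snd z = y}" by (rule measure_pmf.finite_measure_mono) auto
  finally show ?thesis by (simp add: marg_snd_eq_measure)
qed

lemma cond_info_nonneg:
  assumes "(x, y) \<in> set_pmf r"
  shows "cond_info r x y \<ge> 0"
proof -
  have "pmf r (x, y) > 0" using assms by (simp add: pmf_positive)
  then have "1 \<le> marg_snd r y / pmf r (x, y)" using pmf_le_marg_snd[of r x y] by simp
  then show ?thesis by (simp add: cond_info_def)
qed

lemma measure_pmf_slice_eq_infsum: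
  fixes r :: "('x \<times> 'y) pmf"
  shows "measure r {z. fst z = x \<and> snd z \<in> S} = (\<Sum>\<^sub>\<infinity> y \<in> S. pmf r (x, y))"
proof -
  have "(\<Sum>\<^sub>\<infinity> y \<in> S. pmf r (x, y)) = infsum (pmf r) (Pair x ` S)"
    by (subst infsum_reindex) (auto simp: inj_on_def o_def)
  also have "\<dots> = infsetsum (pmf r) (Pair x ` S)"
    by (rule infsetsum_infsum[symmetric]) auto
  also have "Pair x ` S = {z. fst z = x \<and> snd z \<in> S}" by force
  finally show ?thesis by (simp add: measure_pmf_conv_infsetsum)
qed

lemma hbar_eq_info_quantile: "hbar \<epsilon> P n x = info_quantile \<epsilon> (P n) x"
proof -
  have info: "log 2 (1 / condXY P n x y) = cond_info (P n) x y" for y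
    by (simp add: condXY_def pY_def cond_info_def marg_snd_def)
  have cond: "condYX P n y x = pmf (P n) (x, y) * inverse (marg_fst (P n) x)" for y
    by (simp add: condYX_def pX_def marg_fst_def divide_inverse)
  have "(\<Sum>\<^sub>\<infinity> y \<in> {y. log 2 (1 / condXY P n x y) > a}. condYX P n y x)
      = info_tail (P n) x a / marg_fst (P n) x" for a
    using measure_pmf_slice_eq_infsum[of "P n" x "{y. cond_info (P n) x y > a}"]
    by (simp only: info cond infsum_cmult_left') (simp add: info_tail_def divide_inverse)
  then show ?thesis by (simp add: hbar_def info_quantile_def)
qed

lemma info_tail_le_marg_fst: "info_tail r x a \<le> marg_fst r x"
  unfolding info_tail_def marg_fst_eq_measure by (rule measure_pmf.finite_measure_mono) auto

lemma info_tail_antimono: "a \<le> b \<Longrightarrow> info_tail r x b \<le> info_tail r x a"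
  unfolding info_tail_def by (rule measure_pmf.finite_measure_mono) auto

lemma info_tail_negative:
  assumes "a < 0"
  shows "info_tail r x a = marg_fst r x"
proof -
  have "{z. fst z = x} \<inter> set_pmf r \<subseteq> {z. fst z = x \<and> cond_info r x (snd z) > a}"
    using cond_info_nonneg[of x _ r] assms by fastforce
  then have "measure r ({z. fst z = x} \<inter> set_pmf r) \<le> info_tail r x a"
    unfolding info_tail_def by (rule measure_pmf.finite_measure_mono) auto
  then show ?thesis
    using info_tail_le_marg_fst[of r x a] by (simp add: measure_Int_set_pmf marg_fst_eq_measure)
qed

lemma info_tail_tendsto_0: "(\<lambda>k::nat. info_tail r x (real k)) \<longlonglongrightarrow> 0"
proof -
  have "(\<lambda>k. measure r {z. fst z = x \<and> cond_info r x (snd z) > real k}) \<longlonglongrightarrow>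
          measure r (\<Inter>k. {z. fst z = x \<and> cond_info r x (snd z) > real k})"
    by (rule measure_pmf.finite_Lim_measure_decseq) (auto simp: decseq_def)
  moreover have "(\<Inter>k. {z. fst z = x \<and> cond_info r x (snd z) > real k}) = {}"
    by auto (meson reals_Archimedean2 less_asym)
  ultimately show ?thesis by (simp add: info_tail_def)
qed

lemma ex_info_tail_less:
  assumes "\<delta> > 0"
  shows "\<exists>a. info_tail r x a < \<delta>"
proof -
  obtain k where "info_tail r x (real k) < \<delta>"
    using order_tendstoD(2)[OF info_tail_tendsto_0[of r x] assms] by (auto simp: eventually_sequentially)
  then show ?thesis ..
qed

lemma info_quantile_eq_Inf:
  assumes "marg_fst r x > 0"
  shows "info_quantile \<epsilon> r x = Inf {a. info_tail r x a \<le> \<epsilon> * marg_fst r x}"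
  using assms by (simp add: info_quantile_def divide_le_eq)

lemma info_tail_le_imp_nonneg:
  assumes "marg_fst r x > 0" "\<epsilon> < 1" "info_tail r x a \<le> \<epsilon> * marg_fst r x"
  shows "a \<ge> 0"
proof (rule ccontr)
  assume "\<not> a \<ge> 0"
  then have "info_tail r x a = marg_fst r x" by (intro info_tail_negative) simp
  with assms show False by simp
qed

lemma bdd_below_info_tail_le:
  assumes "marg_fst r x > 0" "\<epsilon> < 1"
  shows "bdd_below {a. info_tail r x a \<le> \<epsilon> * marg_fst r x}"
  using info_tail_le_imp_nonneg[OF assms] by (intro bdd_belowI[of _ 0]) auto

lemma info_quantile_le:
  assumes "marg_fst r x > 0" "\<epsilon> < 1" "info_tail r x a \<le> \<epsilon> * marg_fst r x"
  shows "info_quantile \<epsilon> r x \<le> a"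
  unfolding info_quantile_eq_Inf[OF assms(1)]
  by (rule cInf_lower) (use assms(3) bdd_below_info_tail_le[OF assms(1,2)] in auto)

lemma info_quantile_nonneg:
  assumes "marg_fst r x > 0" "0 < \<epsilon>" "\<epsilon> < 1"
  shows "info_quantile \<epsilon> r x \<ge> 0"
proof -
  obtain a where "info_tail r x a < \<epsilon> * marg_fst r x"
    using ex_info_tail_less[of "\<epsilon> * marg_fst r x" r x] assms by auto
  then show ?thesis
    unfolding info_quantile_eq_Inf[OF assms(1)]
    using info_tail_le_imp_nonneg[OF assms(1,3)] by (intro cInf_greatest) (auto dest: less_imp_le)
qed

lemma info_tail_info_quantile_plus:
  assumes "marg_fst r x > 0" "0 < \<epsilon>" "\<epsilon> < 1" "\<eta> > 0"
  shows "info_tail r x (info_quantile \<epsilon> r x + \<eta>) \<le> \<epsilon> * marg_fst r x"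
proof -
  let ?A = "{a. info_tail r x a \<le> \<epsilon> * marg_fst r x}"
  have "?A \<noteq> {}"
    using ex_info_tail_less[of "\<epsilon> * marg_fst r x" r x] assms by (auto intro: less_imp_le)
  moreover have "Inf ?A < info_quantile \<epsilon> r x + \<eta>"
    using assms(4) info_quantile_eq_Inf[OF assms(1)] by simp
  ultimately obtain a where a: "a \<in> ?A" "a < info_quantile \<epsilon> r x + \<eta>"
    by (meson cInf_lessD)
  have "info_tail r x (info_quantile \<epsilon> r x + \<eta>) \<le> info_tail r x a"
    using a(2) by (intro info_tail_antimono) simp
  with a(1) show ?thesis by simp
qed

lemma info_quantile_antimono:
  assumes "marg_fst r x > 0" "0 < \<epsilon>" "\<epsilon> \<le> \<epsilon>'" "\<epsilon>' < 1"
  shows "info_quantile \<epsilon>' r x \<le> info_quantile \<epsilon> r x"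
proof (rule field_le_epsilon)
  fix \<eta> :: real assume "\<eta> > 0"
  have "info_tail r x (info_quantile \<epsilon> r x + \<eta>) \<le> \<epsilon> * marg_fst r x"
    by (rule info_tail_info_quantile_plus) (use assms \<open>\<eta> > 0\<close> in auto)
  also have "\<dots> \<le> \<epsilon>' * marg_fst r x" by (rule mult_right_mono) (use assms in auto)
  finally show "info_quantile \<epsilon>' r x \<le> info_quantile \<epsilon> r x + \<eta>"
    by (rule info_quantile_le[OF assms(1,4)])
qed

section \<open>Markov's inequality along a slice\<close>

definition slice_nn_integral :: "('x \<times> 'y) pmf \<Rightarrow> 'x \<Rightarrow> ('y \<Rightarrow> ennreal) \<Rightarrow> ennreal" where
  "slice_nn_integral r x f = (\<integral>\<^sup>+ y. ennreal (pmf r (x, y)) * f y \<partial>count_space UNIV)"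

lemma nn_integral_pmf_eq_slices:
  "(\<integral>\<^sup>+ z. f z \<partial>measure_pmf r) = (\<integral>\<^sup>+ x. slice_nn_integral r x (\<lambda>y. f (x, y)) \<partial>count_space UNIV)"
proof -
  have "(\<integral>\<^sup>+ z. f z \<partial>measure_pmf r) = (\<integral>\<^sup>+ z. ennreal (pmf r z) * f z \<partial>count_space UNIV)"
    by (rule nn_integral_measure_pmf)
  also have "\<dots> = (\<integral>\<^sup>+ x. \<integral>\<^sup>+ y. ennreal (pmf r (x, y)) * f (x, y) \<partial>count_space UNIV \<partial>count_space UNIV)"
    by (rule nn_integral_fst_count_space[symmetric, where f = "\<lambda>z. ennreal (pmf r z) * f z"])
  finally show ?thesis by (simp add: slice_nn_integral_def)
qed

lemma emeasure_slice_eq: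
  "emeasure (measure_pmf r) {z. fst z = x \<and> snd z \<in> A} = slice_nn_integral r x (indicator A)"
proof -
  have "emeasure (measure_pmf r) {z. fst z = x \<and> snd z \<in> A}
      = (\<integral>\<^sup>+ z. indicator {z. fst z = x \<and> snd z \<in> A} z \<partial>measure_pmf r)"
    by simp
  also have "\<dots> = (\<integral>\<^sup>+ x'. slice_nn_integral r x (indicator A) * indicator {x} x' \<partial>count_space UNIV)"
    unfolding nn_integral_pmf_eq_slices
    by (intro nn_integral_cong) (auto simp: slice_nn_integral_def indicator_def)
  finally show ?thesis by simp
qed

lemma info_tail_eq_slice:
  "ennreal (info_tail r x a) = slice_nn_integral r x (indicator {y. cond_info r x y > a})"
  using emeasure_slice_eq[of r x "{y. cond_info r x y > a}"]
  by (simp add: info_tail_def measure_pmf.emeasure_eq_measure)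

lemma nn_integral_marg_fst: "(\<integral>\<^sup>+ x. ennreal (marg_fst r x) \<partial>count_space UNIV) = 1"
  using nn_integral_pmf[where p = "map_pmf fst r" and A = UNIV] by (simp add: marg_fst_def)

lemma nn_integral_measure_slice:
  fixes r :: "('x \<times> 'y) pmf"
  shows "(\<integral>\<^sup>+ x. ennreal (measure r {z. fst z = x \<and> snd z \<in> B}) \<partial>count_space UNIV)
     = emeasure (measure_pmf r) {z. snd z \<in> B}"
proof -
  have "(\<integral>\<^sup>+ x. ennreal (measure r {z. fst z = x \<and> snd z \<in> B}) \<partial>count_space UNIV)
      = (\<integral>\<^sup>+ z. indicator B (snd z) \<partial>measure_pmf r)"
    by (simp add: nn_integral_pmf_eq_slices emeasure_slice_eq[symmetric] measure_pmf.emeasure_eq_measure)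
  also have "\<dots> = (\<integral>\<^sup>+ z. indicator {z. snd z \<in> B} z \<partial>measure_pmf r)"
    by (intro nn_integral_cong) (simp add: indicator_def)
  also have "\<dots> = emeasure (measure_pmf r) {z. snd z \<in> B}" by simp
  finally show ?thesis .
qed

lemma slice_nn_integral_mono: "(\<And>y. f y \<le> g y) \<Longrightarrow> slice_nn_integral r x f \<le> slice_nn_integral r x g"
  unfolding slice_nn_integral_def by (intro nn_integral_mono mult_left_mono) auto

lemma info_tail_Markov:
  assumes "t > 0"
  shows "ennreal (info_tail r x t) \<le> slice_nn_integral r x (\<lambda>y. ennreal (cond_info r x y)) / ennreal t"
proof -
  have "ennreal (info_tail r x t) \<le> slice_nn_integral r x (\<lambda>y. ennreal (cond_info r x y) / ennreal t)"
    unfolding info_tail_eq_slice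
  proof (rule slice_nn_integral_mono)
    fix y
    show "indicator {y. cond_info r x y > t} y \<le> ennreal (cond_info r x y) / ennreal t"
    proof (cases "cond_info r x y > t")
      case True
      then have "1 \<le> ennreal (cond_info r x y / t)" using assms by (simp add: ennreal_ge_1)
      with True assms show ?thesis by (simp add: divide_ennreal)
    qed simp
  qed
  also have "\<dots> = slice_nn_integral r x (\<lambda>y. ennreal (cond_info r x y)) / ennreal t"
    unfolding slice_nn_integral_def by (simp add: nn_integral_divide[symmetric] ennreal_times_divide)
  finally show ?thesis .
qed

lemma marg_fst_mult_info_quantile_le:
  assumes "marg_fst r x > 0" "0 < \<epsilon>" "\<epsilon> < 1"
  shows "ennreal (marg_fst r x) * ennreal (info_quantile \<epsilon> r x)
    \<le> slice_nn_integral r x (\<lambda>y. ennreal (cond_info r x y)) / ennreal \<epsilon>"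
proof (cases "slice_nn_integral r x (\<lambda>y. ennreal (cond_info r x y))")
  case (real e)
  have budget: "\<epsilon> * marg_fst r x > 0" using assms by simp
  have "info_quantile \<epsilon> r x \<le> e / (\<epsilon> * marg_fst r x)"
  proof (rule field_le_epsilon)
    fix \<theta> :: real assume "\<theta> > 0"
    define t where "t = e / (\<epsilon> * marg_fst r x) + \<theta>"
    have "t > 0" unfolding t_def using \<open>\<theta> > 0\<close> real budget by (simp add: add_nonneg_pos)
    have "ennreal (info_tail r x t) \<le> ennreal (e / t)"
      using info_tail_Markov[OF \<open>t > 0\<close>, of r x] real \<open>t > 0\<close> by (simp add: divide_ennreal)
    then have "info_tail r x t \<le> e / t" using \<open>t > 0\<close> real by (simp add: ennreal_le_iff)
    also have "e / t \<le> \<epsilon> * marg_fst r x"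
    proof -
      have "e \<le> \<epsilon> * marg_fst r x * t"
        using \<open>\<theta> > 0\<close> assms(1,2) by (simp add: t_def distrib_left)
      then show ?thesis using \<open>t > 0\<close> by (simp add: divide_le_eq)
    qed
    finally show "info_quantile \<epsilon> r x \<le> e / (\<epsilon> * marg_fst r x) + \<theta>"
      unfolding t_def[symmetric] by (rule info_quantile_le[OF assms(1,3)])
  qed
  then have "marg_fst r x * info_quantile \<epsilon> r x \<le> e / \<epsilon>"
    using assms by (simp add: field_simps)
  then show ?thesis using real assms by (simp add: ennreal_mult'[symmetric] divide_ennreal ennreal_leI)
qed (use assms in \<open>simp add: ennreal_top_divide\<close>)

section \<open>A pmf versus a dominated component\<close>

lemma cond_info_le_dominated:
  assumes dom: "\<And>z. \<alpha> * pmf qi z \<le> pmf q z" and "\<alpha> > 0" and "pmf qi (x, y) > 0"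
  shows "cond_info q x y \<le> cond_info qi x y + log 2 (marg_snd q y / (\<alpha> * marg_snd qi y))"
proof -
  have q: "\<alpha> * pmf qi (x, y) \<le> pmf q (x, y)" by (rule dom)
  have qi_pos: "\<alpha> * pmf qi (x, y) > 0" using assms by simp
  have q_pos: "marg_snd q y > 0" "pmf q (x, y) > 0"
    using pmf_le_marg_snd[of q x y] q qi_pos by linarith+
  have marg_qi_pos: "marg_snd qi y > 0" using pmf_le_marg_snd[of qi x y] assms(3) by linarith
  have "marg_snd q y / pmf q (x, y) \<le> marg_snd q y / (\<alpha> * pmf qi (x, y))"
    using q qi_pos q_pos by (intro divide_left_mono) auto
  also have "\<dots> = (marg_snd q y / (\<alpha> * marg_snd qi y)) * (marg_snd qi y / pmf qi (x, y))"
    using marg_qi_pos by simp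
  finally have "cond_info q x y \<le> log 2 ((marg_snd q y / (\<alpha> * marg_snd qi y)) * (marg_snd qi y / pmf qi (x, y)))"
    unfolding cond_info_def using q_pos by (intro log_mono) auto
  also have "\<dots> = log 2 (marg_snd q y / (\<alpha> * marg_snd qi y)) + cond_info qi x y"
    unfolding cond_info_def using q_pos marg_qi_pos assms by (intro log_mult_pos) auto
  finally show ?thesis by simp
qed

definition excess_set :: "('x \<times> 'y) pmf \<Rightarrow> ('x \<times> 'y) pmf \<Rightarrow> real \<Rightarrow> real \<Rightarrow> 'y set" where
  "excess_set q qi \<alpha> c = {y. marg_snd q y > 2 powr c * \<alpha> * marg_snd qi y}"

lemma measure_pmf_likelihood_ratio_gt:
  fixes p q :: "'y pmf"
  assumes "K > 0"
  shows "measure p {y. pmf q y > K * pmf p y} \<le> 1 / K"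
proof -
  let ?B = "{y. pmf q y > K * pmf p y}"
  have "measure p ?B = infsetsum (pmf p) ?B" by (rule measure_pmf_conv_infsetsum)
  also have "\<dots> \<le> infsetsum (\<lambda>y. pmf q y * inverse K) ?B"
    using assms by (intro infsetsum_mono abs_summable_on_cmult_left) (auto simp: field_simps)
  also have "\<dots> = measure q ?B * inverse K"
    by (simp add: infsetsum_cmult_left[OF pmf_abs_summable] measure_pmf_conv_infsetsum)
  also have "\<dots> \<le> 1 / K" using assms by (simp add: divide_inverse)
  finally show ?thesis .
qed

lemma measure_excess_set_le:
  fixes q qi :: "('x \<times> 'y) pmf"
  assumes "\<alpha> > 0"
  shows "measure qi {z. snd z \<in> excess_set q qi \<alpha> c} \<le> 1 / (2 powr c * \<alpha>)"
  using measure_pmf_likelihood_ratio_gt[of "2 powr c * \<alpha>" "map_pmf snd qi" "map_pmf snd q"] assms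
  by (simp add: excess_set_def marg_snd_def vimage_def)

lemma info_tail_dominated_le:
  assumes dom: "\<And>z. \<alpha> * pmf qi z \<le> pmf q z" and "\<alpha> > 0"
  shows "measure qi {z. fst z = x \<and> cond_info q x (snd z) > a + c}
     \<le> info_tail qi x a + measure qi {z. fst z = x \<and> snd z \<in> excess_set q qi \<alpha> c}"
proof -
  let ?S = "{z. fst z = x \<and> cond_info q x (snd z) > a + c}"
  let ?A = "{z. fst z = x \<and> cond_info qi x (snd z) > a}"
  let ?C = "{z. fst z = x \<and> snd z \<in> excess_set q qi \<alpha> c}"
  have "(x, y) \<in> ?A \<union> ?C"
    if "(x, y) \<in> set_pmf qi" "cond_info q x y > a + c" for y
  proof (cases "y \<in> excess_set q qi \<alpha> c")
    case False
    have pos: "pmf qi (x, y) > 0" using that(1) by (simp add: pmf_positive)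
    have den: "\<alpha> * marg_snd qi y > 0" using pmf_le_marg_snd[of qi x y] pos assms(2) by simp
    have num: "marg_snd q y > 0"
      using dom[of "(x, y)"] pmf_le_marg_snd[of q x y] pos assms(2) by (smt (verit) mult_pos_pos)
    have "marg_snd q y / (\<alpha> * marg_snd qi y) \<le> 2 powr c"
      using False den by (simp add: excess_set_def pos_divide_le_eq mult.commute mult.left_commute)
    then have "log 2 (marg_snd q y / (\<alpha> * marg_snd qi y)) \<le> log 2 (2 powr c)"
      using num den by (intro log_mono) auto
    then have "log 2 (marg_snd q y / (\<alpha> * marg_snd qi y)) \<le> c" by simp
    with cond_info_le_dominated[OF dom assms(2) pos] that(2) show ?thesis by auto
  qed simp
  then have "?S \<inter> set_pmf qi \<subseteq> ?A \<union> ?C" by fastforce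
  then have "measure qi (?S \<inter> set_pmf qi) \<le> measure qi (?A \<union> ?C)"
    by (rule measure_pmf.finite_measure_mono) auto
  also have "\<dots> \<le> measure qi ?A + measure qi ?C" by (rule measure_subadditive) (auto simp: measure_pmf.emeasure_eq_measure)
  finally show ?thesis by (simp add: measure_Int_set_pmf info_tail_def)
qed

text \<open>As \<open>ennreal\<close> clips negative values, the integrand is the positive part of the
  log-likelihood ratio; the bound comes from \<open>ln u < u\<close>.\<close>

lemma nn_integral_pos_log_ratio_le:
  fixes p q :: "'y pmf"
  assumes "\<alpha> > 0"
  shows "(\<integral>\<^sup>+ y. ennreal (log 2 (pmf q y / (\<alpha> * pmf p y))) \<partial>measure_pmf p) \<le> ennreal (1 / (\<alpha> * ln 2))"
proof -
  have pointwise: "pmf p y * log 2 (pmf q y / (\<alpha> * pmf p y)) \<le> pmf q y / (\<alpha> * ln 2)" for y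
  proof (cases "pmf p y > 0 \<and> pmf q y > 0")
    case True
    let ?u = "pmf q y / (\<alpha> * pmf p y)"
    have "ln ?u \<le> ?u" using True assms by (simp add: ln_less_self less_imp_le)
    then have "log 2 ?u \<le> ?u / ln 2" unfolding log_def by (rule divide_right_mono) simp
    then have "pmf p y * log 2 ?u \<le> pmf p y * (?u / ln 2)"
      using True by (intro mult_left_mono) auto
    also have "\<dots> = pmf q y / (\<alpha> * ln 2)" using True assms by simp
    finally show ?thesis .
  next
    case False
    then have "pmf p y = 0 \<or> pmf q y = 0" by (simp add: order.strict_iff_order)
    then show ?thesis using assms by (auto simp: log_def)
  qed
  have "(\<integral>\<^sup>+ y. ennreal (log 2 (pmf q y / (\<alpha> * pmf p y))) \<partial>measure_pmf p)
      = (\<integral>\<^sup>+ y. ennreal (pmf p y * log 2 (pmf q y / (\<alpha> * pmf p y))) \<partial>count_space UNIV)"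
    by (simp add: nn_integral_measure_pmf ennreal_mult')
  also have "\<dots> \<le> (\<integral>\<^sup>+ y. ennreal (1 / (\<alpha> * ln 2)) * ennreal (pmf q y) \<partial>count_space UNIV)"
    using assms by (intro nn_integral_mono) (simp add: pointwise ennreal_leI ennreal_mult'[symmetric])
  also have "\<dots> = ennreal (1 / (\<alpha> * ln 2))"
    by (simp add: nn_integral_cmult nn_integral_pmf)
  finally show ?thesis .
qed

lemma nn_integral_cond_info_dominated_le:
  assumes dom: "\<And>z. \<alpha> * pmf qi z \<le> pmf q z" and "\<alpha> > 0"
  shows "(\<integral>\<^sup>+ z. indicator D (fst z) * ennreal (cond_info q (fst z) (snd z)) \<partial>measure_pmf qi)
    \<le> (\<integral>\<^sup>+ z. indicator D (fst z) * ennreal (cond_info qi (fst z) (snd z)) \<partial>measure_pmf qi)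
       + ennreal (1 / (\<alpha> * ln 2))"
proof -
  let ?r = "\<lambda>y. log 2 (marg_snd q y / (\<alpha> * marg_snd qi y))"
  have "(\<integral>\<^sup>+ z. indicator D (fst z) * ennreal (cond_info q (fst z) (snd z)) \<partial>measure_pmf qi)
    \<le> (\<integral>\<^sup>+ z. indicator D (fst z) * ennreal (cond_info qi (fst z) (snd z)) + ennreal (?r (snd z))
          \<partial>measure_pmf qi)"
  proof (rule nn_integral_mono_AE, unfold AE_measure_pmf_iff, intro ballI)
    fix z assume "z \<in> set_pmf qi"
    moreover obtain x y where z: "z = (x, y)" by (cases z)
    ultimately have "pmf qi (x, y) > 0" by (simp add: pmf_positive)
    then have "ennreal (cond_info q x y) \<le> ennreal (cond_info qi x y) + ennreal (?r y)"
      using cond_info_le_dominated[OF dom assms(2)] ennreal_add_le order.trans ennreal_leI by metis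
    then show "indicator D (fst z) * ennreal (cond_info q (fst z) (snd z))
        \<le> indicator D (fst z) * ennreal (cond_info qi (fst z) (snd z)) + ennreal (?r (snd z))"
      by (auto simp: z indicator_def add_increasing)
  qed
  also have "\<dots> = (\<integral>\<^sup>+ z. indicator D (fst z) * ennreal (cond_info qi (fst z) (snd z)) \<partial>measure_pmf qi)
      + (\<integral>\<^sup>+ y. ennreal (?r y) \<partial>measure_pmf (map_pmf snd qi))"
    by (subst nn_integral_add) auto
  also have "(\<integral>\<^sup>+ y. ennreal (?r y) \<partial>measure_pmf (map_pmf snd qi)) \<le> ennreal (1 / (\<alpha> * ln 2))"
    using nn_integral_pos_log_ratio_le[OF assms(2), where p = "map_pmf snd qi" and q = "map_pmf snd q"]
    by (simp add: marg_snd_def)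
  finally show ?thesis by (simp add: add_left_mono)
qed

lemma emeasure_dominated_le:
  assumes dom: "\<And>z. \<alpha> * pmf qi z \<le> pmf q z" and "\<alpha> > 0"
  shows "ennreal \<alpha> * emeasure (measure_pmf qi) S \<le> emeasure (measure_pmf q) S"
proof -
  have "\<alpha> * measure qi S = infsetsum (\<lambda>z. \<alpha> * pmf qi z) S"
    by (simp add: infsetsum_cmult_right[OF pmf_abs_summable] measure_pmf_conv_infsetsum)
  also have "\<dots> \<le> measure q S"
    unfolding measure_pmf_conv_infsetsum by (rule infsetsum_mono) (auto intro: dom)
  finally show ?thesis
    using assms(2) by (simp add: measure_pmf.emeasure_eq_measure ennreal_mult[symmetric] ennreal_leI)
qed

section \<open>Mixtures of two joint pmfs\<close>

locale pmf_mixture =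
  fixes q q1 q2 :: "('x \<times> 'y) pmf" and \<alpha>1 \<alpha>2 :: real
  assumes \<alpha>1_pos: "\<alpha>1 > 0" and \<alpha>2_pos: "\<alpha>2 > 0" and \<alpha>_sum: "\<alpha>1 + \<alpha>2 = 1"
    and pmf_eq: "\<And>z. pmf q z = \<alpha>1 * pmf q1 z + \<alpha>2 * pmf q2 z"
begin

lemma measure_eq: "measure q S = \<alpha>1 * measure q1 S + \<alpha>2 * measure q2 S"
proof -
  have "measure q S = infsetsum (\<lambda>z. \<alpha>1 * pmf q1 z + \<alpha>2 * pmf q2 z) S"
    by (simp add: measure_pmf_conv_infsetsum pmf_eq)
  also have "\<dots> = infsetsum (\<lambda>z. \<alpha>1 * pmf q1 z) S + infsetsum (\<lambda>z. \<alpha>2 * pmf q2 z) S"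
    by (rule infsetsum_add) auto
  also have "\<dots> = \<alpha>1 * measure q1 S + \<alpha>2 * measure q2 S"
    by (simp add: infsetsum_cmult_right[OF pmf_abs_summable] measure_pmf_conv_infsetsum)
  finally show ?thesis .
qed

lemma nn_integral_eq:
  "(\<integral>\<^sup>+ z. f z \<partial>measure_pmf q)
     = ennreal \<alpha>1 * (\<integral>\<^sup>+ z. f z \<partial>measure_pmf q1) + ennreal \<alpha>2 * (\<integral>\<^sup>+ z. f z \<partial>measure_pmf q2)"
proof -
  have "(\<integral>\<^sup>+ z. f z \<partial>measure_pmf q) = (\<integral>\<^sup>+ z. ennreal \<alpha>1 * (ennreal (pmf q1 z) * f z) +
        ennreal \<alpha>2 * (ennreal (pmf q2 z) * f z) \<partial>count_space UNIV)"
    unfolding nn_integral_measure_pmf pmf_eq using \<alpha>1_pos \<alpha>2_pos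
    by (intro nn_integral_cong) (simp add: ennreal_mult distrib_right mult.assoc)
  then show ?thesis by (simp add: nn_integral_add nn_integral_cmult nn_integral_measure_pmf)
qed

lemma marg_fst_eq: "marg_fst q x = \<alpha>1 * marg_fst q1 x + \<alpha>2 * marg_fst q2 x"
  by (simp add: marg_fst_eq_measure measure_eq)

lemma dominates1: "\<alpha>1 * pmf q1 z \<le> pmf q z"
  using pmf_eq \<alpha>2_pos by (simp add: add_increasing2)

lemma dominates2: "\<alpha>2 * pmf q2 z \<le> pmf q z"
  using pmf_eq \<alpha>1_pos by (simp add: add_increasing)

definition excess_mass :: "real \<Rightarrow> 'x \<Rightarrow> real" where
  "excess_mass c x = \<alpha>1 * measure q1 {z. fst z = x \<and> snd z \<in> excess_set q q1 \<alpha>1 c}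
                   + \<alpha>2 * measure q2 {z. fst z = x \<and> snd z \<in> excess_set q q2 \<alpha>2 c}"

definition bad_words :: "real \<Rightarrow> real \<Rightarrow> 'x set" where
  "bad_words \<epsilon> c = {x. marg_fst q x > 0 \<and> excess_mass c x > \<epsilon> / 2 * marg_fst q x}"

lemma excess_mass_nonneg: "excess_mass c x \<ge> 0"
  using \<alpha>1_pos \<alpha>2_pos by (simp add: excess_mass_def)

lemma info_tail_le:
  "info_tail q x (a + c) \<le> \<alpha>1 * info_tail q1 x a + \<alpha>2 * info_tail q2 x a + excess_mass c x"
proof -
  let ?S = "{z. fst z = x \<and> cond_info q x (snd z) > a + c}"
  have "info_tail q x (a + c) = \<alpha>1 * measure q1 ?S + \<alpha>2 * measure q2 ?S"
    by (simp add: info_tail_def measure_eq)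
  also have "\<dots> \<le> \<alpha>1 * (info_tail q1 x a + measure q1 {z. fst z = x \<and> snd z \<in> excess_set q q1 \<alpha>1 c})
                 + \<alpha>2 * (info_tail q2 x a + measure q2 {z. fst z = x \<and> snd z \<in> excess_set q q2 \<alpha>2 c})"
    using \<alpha>1_pos \<alpha>2_pos
    by (intro add_mono mult_left_mono info_tail_dominated_le dominates1 dominates2) auto
  finally show ?thesis by (simp add: excess_mass_def distrib_left)
qed

lemma info_quantile_le_max:
  assumes "marg_fst q1 x > 0" "marg_fst q2 x > 0" "0 < \<epsilon>" "\<epsilon> < 1" "x \<notin> bad_words \<epsilon> c"
  shows "info_quantile \<epsilon> q x \<le> max (info_quantile (\<epsilon>/2) q1 x) (info_quantile (\<epsilon>/2) q2 x) + 1 + c"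
proof -
  define a where "a = max (info_quantile (\<epsilon>/2) q1 x) (info_quantile (\<epsilon>/2) q2 x) + 1"
  have q_pos: "marg_fst q x > 0"
    using assms(1,2) \<alpha>1_pos \<alpha>2_pos by (simp add: marg_fst_eq add_pos_pos)
  have "info_tail qi x a \<le> \<epsilon>/2 * marg_fst qi x"
    if "marg_fst qi x > 0" "info_quantile (\<epsilon>/2) qi x + 1 \<le> a" for qi :: "('x \<times> 'y) pmf"
    by (rule order.trans[OF info_tail_antimono[OF that(2)]])
      (use info_tail_info_quantile_plus[OF that(1), of "\<epsilon>/2" 1] assms(3,4) in simp)
  then have tails: "info_tail q1 x a \<le> \<epsilon>/2 * marg_fst q1 x" "info_tail q2 x a \<le> \<epsilon>/2 * marg_fst q2 x"
    using assms(1,2) by (auto simp: a_def)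
  have "info_tail q x (a + c) \<le> \<alpha>1 * info_tail q1 x a + \<alpha>2 * info_tail q2 x a + excess_mass c x"
    by (rule info_tail_le)
  also have "\<dots> \<le> \<alpha>1 * (\<epsilon>/2 * marg_fst q1 x) + \<alpha>2 * (\<epsilon>/2 * marg_fst q2 x) + \<epsilon>/2 * marg_fst q x"
    using tails assms(5) q_pos \<alpha>1_pos \<alpha>2_pos
    by (intro add_mono mult_left_mono) (auto simp: bad_words_def)
  also have "\<dots> = \<epsilon> * marg_fst q x" by (simp add: marg_fst_eq field_simps)
  finally have "info_quantile \<epsilon> q x \<le> a + c" by (rule info_quantile_le[OF q_pos assms(4)])
  then show ?thesis by (simp add: a_def)
qed

lemma marg_fst_mult_info_quantile_le_split:
  assumes "0 < \<epsilon>" "\<epsilon> < 1" "c \<ge> 0"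
    and pos: "marg_fst q x > 0 \<Longrightarrow> marg_fst q1 x > 0 \<and> marg_fst q2 x > 0"
  shows "ennreal (marg_fst q x) * ennreal (info_quantile \<epsilon> q x)
    \<le> ennreal (marg_fst q x) * ennreal (max (info_quantile (\<epsilon>/2) q1 x) (info_quantile (\<epsilon>/2) q2 x))
      + ennreal (marg_fst q x) * ennreal (1 + c)
      + slice_nn_integral q x (\<lambda>y. indicator (bad_words \<epsilon> c) x * ennreal (cond_info q x y)) / ennreal \<epsilon>"
    (is "?lhs \<le> ?good + ?cost + ?bad")
proof (cases "marg_fst q x > 0")
  case False
  then show ?thesis by (simp add: order.strict_iff_order)
next
  case True
  show ?thesis
  proof (cases "x \<in> bad_words \<epsilon> c")
    case True
    with \<open>marg_fst q x > 0\<close> assms(1,2) have "?lhs \<le> ?bad"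
      using marg_fst_mult_info_quantile_le by simp
    then show ?thesis by (simp add: add_increasing)
  next
    case False
    note components = pos[OF \<open>marg_fst q x > 0\<close>]
    have "info_quantile \<epsilon> q x \<le> max (info_quantile (\<epsilon>/2) q1 x) (info_quantile (\<epsilon>/2) q2 x) + (1 + c)"
      using info_quantile_le_max[of x \<epsilon> c] components assms(1,2) False by simp
    moreover have "max (info_quantile (\<epsilon>/2) q1 x) (info_quantile (\<epsilon>/2) q2 x) \<ge> 0"
      using info_quantile_nonneg[of q1 x "\<epsilon>/2"] components assms(1,2) by (simp add: le_max_iff_disj)
    ultimately have "ennreal (info_quantile \<epsilon> q x)
        \<le> ennreal (max (info_quantile (\<epsilon>/2) q1 x) (info_quantile (\<epsilon>/2) q2 x)) + ennreal (1 + c)"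
      using assms(3) by (simp add: ennreal_leI flip: ennreal_plus)
    then have "?lhs \<le> ?good + ?cost" by (simp add: mult_left_mono flip: distrib_left)
    then show ?thesis by (simp add: add_increasing2)
  qed
qed

lemma nn_integral_info_quantile_le:
  assumes "0 < \<epsilon>" "\<epsilon> < 1" "c \<ge> 0"
    and pos: "\<And>x. marg_fst q x > 0 \<Longrightarrow> marg_fst q1 x > 0 \<and> marg_fst q2 x > 0"
  shows "(\<integral>\<^sup>+ x. ennreal (marg_fst q x) * ennreal (info_quantile \<epsilon> q x) \<partial>count_space UNIV)
     \<le> (\<integral>\<^sup>+ x. ennreal (marg_fst q x) * ennreal (max (info_quantile (\<epsilon>/2) q1 x) (info_quantile (\<epsilon>/2) q2 x))
           \<partial>count_space UNIV)
        + ennreal (1 + c)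
        + (\<integral>\<^sup>+ z. indicator (bad_words \<epsilon> c) (fst z) * ennreal (cond_info q (fst z) (snd z)) \<partial>measure_pmf q)
          / ennreal \<epsilon>"
proof -
  let ?good = "\<lambda>x. ennreal (marg_fst q x) * ennreal (max (info_quantile (\<epsilon>/2) q1 x) (info_quantile (\<epsilon>/2) q2 x))"
  let ?cost = "\<lambda>x. ennreal (marg_fst q x) * ennreal (1 + c)"
  let ?bad = "\<lambda>x. slice_nn_integral q x (\<lambda>y. indicator (bad_words \<epsilon> c) x * ennreal (cond_info q x y)) / ennreal \<epsilon>"
  have "(\<integral>\<^sup>+ x. ennreal (marg_fst q x) * ennreal (info_quantile \<epsilon> q x) \<partial>count_space UNIV)
      \<le> (\<integral>\<^sup>+ x. ?good x \<partial>count_space UNIV) + (\<integral>\<^sup>+ x. ?cost x \<partial>count_space UNIV)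
         + (\<integral>\<^sup>+ x. ?bad x \<partial>count_space UNIV)"
    using marg_fst_mult_info_quantile_le_split[OF assms(1-3) pos]
    by (simp add: nn_integral_mono flip: nn_integral_add)
  also have "(\<integral>\<^sup>+ x. ?cost x \<partial>count_space UNIV) = ennreal (1 + c)"
    by (simp add: nn_integral_multc nn_integral_marg_fst)
  also have "(\<integral>\<^sup>+ x. ?bad x \<partial>count_space UNIV)
      = (\<integral>\<^sup>+ z. indicator (bad_words \<epsilon> c) (fst z) * ennreal (cond_info q (fst z) (snd z)) \<partial>measure_pmf q)
        / ennreal \<epsilon>"
    by (simp add: nn_integral_divide nn_integral_pmf_eq_slices)
  finally show ?thesis .
qed

lemma nn_integral_cond_info_le:
  "(\<integral>\<^sup>+ z. indicator D (fst z) * ennreal (cond_info q (fst z) (snd z)) \<partial>measure_pmf q)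
    \<le> ennreal \<alpha>1 * (\<integral>\<^sup>+ z. indicator D (fst z) * ennreal (cond_info q1 (fst z) (snd z)) \<partial>measure_pmf q1)
      + ennreal \<alpha>2 * (\<integral>\<^sup>+ z. indicator D (fst z) * ennreal (cond_info q2 (fst z) (snd z)) \<partial>measure_pmf q2)
      + ennreal (2 / ln 2)"
proof -
  let ?I = "\<lambda>r s. (\<integral>\<^sup>+ z. indicator D (fst z) * ennreal (cond_info r (fst z) (snd z)) \<partial>measure_pmf s)"
  have "?I q q = ennreal \<alpha>1 * ?I q q1 + ennreal \<alpha>2 * ?I q q2" by (rule nn_integral_eq)
  also have "\<dots> \<le> ennreal \<alpha>1 * (?I q1 q1 + ennreal (1 / (\<alpha>1 * ln 2)))
                 + ennreal \<alpha>2 * (?I q2 q2 + ennreal (1 / (\<alpha>2 * ln 2)))"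
    by (intro add_mono mult_left_mono nn_integral_cond_info_dominated_le dominates1 dominates2
        \<alpha>1_pos \<alpha>2_pos) auto
  also have "\<dots> = ennreal \<alpha>1 * ?I q1 q1 + ennreal \<alpha>2 * ?I q2 q2 + ennreal (2 / ln 2)"
    using \<alpha>1_pos \<alpha>2_pos by (simp add: distrib_left ac_simps flip: ennreal_mult ennreal_plus)
  finally show ?thesis .
qed

lemma emeasure_bad_words_le:
  assumes "0 < \<epsilon>"
  shows "emeasure (measure_pmf q) {z. fst z \<in> bad_words \<epsilon> c} \<le> ennreal (4 / (\<epsilon> * 2 powr c))"
proof -
  let ?B1 = "excess_set q q1 \<alpha>1 c" and ?B2 = "excess_set q q2 \<alpha>2 c"
  have "emeasure (measure_pmf q) {z. fst z \<in> bad_words \<epsilon> c}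
      = emeasure (measure_pmf (map_pmf fst q)) (bad_words \<epsilon> c)"
    by (simp add: vimage_def)
  also have "\<dots> = (\<integral>\<^sup>+ x. indicator (bad_words \<epsilon> c) x \<partial>measure_pmf (map_pmf fst q))"
    by (rule nn_integral_indicator[symmetric]) simp
  also have "\<dots> = (\<integral>\<^sup>+ x. ennreal (marg_fst q x) * indicator (bad_words \<epsilon> c) x \<partial>count_space UNIV)"
    by (simp only: nn_integral_measure_pmf marg_fst_def)
  also have "\<dots> \<le> (\<integral>\<^sup>+ x. ennreal (2 / \<epsilon>) * ennreal (excess_mass c x) \<partial>count_space UNIV)"
  proof (rule nn_integral_mono)
    fix x
    have "marg_fst q x \<le> 2 / \<epsilon> * excess_mass c x" if "x \<in> bad_words \<epsilon> c"
      using that assms by (simp add: bad_words_def field_simps)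
    then show "ennreal (marg_fst q x) * indicator (bad_words \<epsilon> c) x
        \<le> ennreal (2 / \<epsilon>) * ennreal (excess_mass c x)"
      using assms excess_mass_nonneg[of c x]
      by (auto simp: indicator_def ennreal_leI simp flip: ennreal_mult)
  qed
  also have "\<dots> = ennreal (2 / \<epsilon>) * (\<integral>\<^sup>+ x. ennreal (excess_mass c x) \<partial>count_space UNIV)"
    by (rule nn_integral_cmult) simp
  also have "(\<integral>\<^sup>+ x. ennreal (excess_mass c x) \<partial>count_space UNIV)
      = ennreal \<alpha>1 * emeasure (measure_pmf q1) {z. snd z \<in> ?B1}
        + ennreal \<alpha>2 * emeasure (measure_pmf q2) {z. snd z \<in> ?B2}"
    unfolding excess_mass_def using \<alpha>1_pos \<alpha>2_pos
    by (simp add: ennreal_mult nn_integral_add nn_integral_cmult nn_integral_measure_slice)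
  also have "\<dots> \<le> ennreal \<alpha>1 * ennreal (1 / (2 powr c * \<alpha>1)) + ennreal \<alpha>2 * ennreal (1 / (2 powr c * \<alpha>2))"
    using \<alpha>1_pos \<alpha>2_pos measure_excess_set_le
    by (intro add_mono mult_left_mono) (auto simp: measure_pmf.emeasure_eq_measure intro!: ennreal_leI)
  also have "\<dots> = ennreal (2 / 2 powr c)"
    using \<alpha>1_pos \<alpha>2_pos by (simp flip: ennreal_mult ennreal_plus)
  also have "ennreal (2 / \<epsilon>) * ennreal (2 / 2 powr c) = ennreal (4 / (\<epsilon> * 2 powr c))"
    using assms by (simp flip: ennreal_mult)
  finally show ?thesis by (simp add: mult_left_mono)
qed

end

section \<open>Sources\<close>

lemma Hs_eps_eq_nn_integral:
  fixes P :: "('a::countable, 'b::countable) source"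
  shows "Hs_eps \<epsilon> P n
    = (\<integral>\<^sup>+ x. ennreal (marg_fst (P n) x) * ennreal (info_quantile \<epsilon> (P n) x) \<partial>count_space UNIV)"
  by (simp add: Hs_eps_def infsum_eq_nn_integral pX_def marg_fst_def hbar_eq_info_quantile)

lemma Hmax_eps_eq_nn_integral:
  fixes P P1 P2 :: "('a::countable, 'b::countable) source"
  shows "Hmax_eps \<epsilon> P P1 P2 n
    = (\<integral>\<^sup>+ x. ennreal (marg_fst (P n) x)
             * ennreal (max (info_quantile \<epsilon> (P1 n) x) (info_quantile \<epsilon> (P2 n) x)) \<partial>count_space UNIV)"
  by (simp add: Hmax_eps_def infsum_eq_nn_integral pX_def marg_fst_def hbar_eq_info_quantile)

lemma is_source_marg_fst_pos_iff:
  assumes "is_source P"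
  shows "marg_fst (P n) x > 0 \<longleftrightarrow> length x = n"
  using assms by (force simp: is_source_def marg_fst_def pmf_positive_iff)

lemma marg_fst_mixture_of_sources_pos:
  assumes "is_source P1" "is_source P2" "pmf_mixture q (P1 n) (P2 n) \<alpha>1 \<alpha>2" "marg_fst q x > 0"
  shows "marg_fst (P1 n) x > 0 \<and> marg_fst (P2 n) x > 0"
proof -
  interpret pmf_mixture q "P1 n" "P2 n" \<alpha>1 \<alpha>2 by (rule assms(3))
  have "marg_fst (P1 n) x > 0 \<or> marg_fst (P2 n) x > 0"
    using assms(4) marg_fst_nonneg[of "P1 n" x] marg_fst_nonneg[of "P2 n" x]
    by (auto simp: marg_fst_eq order.strict_iff_order)
  then show ?thesis using is_source_marg_fst_pos_iff[OF assms(1)] is_source_marg_fst_pos_iff[OF assms(2)]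
    by blast
qed

definition ui_tail :: "('a, 'b) source \<Rightarrow> real \<Rightarrow> ennreal" where
  "ui_tail Q u = (SUP m\<in>{1..}. \<integral>\<^sup>+ w. (if \<bar>w\<bar> \<ge> u then ennreal \<bar>w\<bar> else 0) \<partial>measure_pmf (map_pmf (Zn Q m) (Q m)))"

lemma Zn_eq_cond_info: "Zn Q n z = cond_info (Q n) (fst z) (snd z) / real n"
  by (simp add: Zn_def cond_info_def condXY_def pY_def marg_snd_def)

lemma nn_integral_cond_info_le_ui_tail:
  assumes "n \<ge> 1" "u \<ge> 0"
  shows "(\<integral>\<^sup>+ z. indicator D (fst z) * ennreal (cond_info (Q n) (fst z) (snd z)) \<partial>measure_pmf (Q n))
    \<le> of_nat n * (ui_tail Q u + ennreal u * emeasure (measure_pmf (Q n)) {z. fst z \<in> D})"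
proof -
  let ?Z = "Zn Q n"
  let ?tail = "\<lambda>w::real. if \<bar>w\<bar> \<ge> u then ennreal \<bar>w\<bar> else 0"
  have "indicator D (fst z) * ennreal (cond_info (Q n) (fst z) (snd z))
      = of_nat n * (indicator D (fst z) * ennreal (?Z z))" for z
  proof -
    have "ennreal (real n) * ennreal (t / real n) = ennreal t" for t
      using assms(1) by (simp flip: ennreal_mult')
    then show ?thesis by (simp add: Zn_eq_cond_info ennreal_of_nat_eq_real_of_nat indicator_mult_ennreal)
  qed
  then have "(\<integral>\<^sup>+ z. indicator D (fst z) * ennreal (cond_info (Q n) (fst z) (snd z)) \<partial>measure_pmf (Q n))
      = of_nat n * (\<integral>\<^sup>+ z. indicator D (fst z) * ennreal (?Z z) \<partial>measure_pmf (Q n))"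
    by (simp add: nn_integral_cmult)
  also have "(\<integral>\<^sup>+ z. indicator D (fst z) * ennreal (?Z z) \<partial>measure_pmf (Q n))
     \<le> (\<integral>\<^sup>+ z. ?tail (?Z z) + ennreal u * indicator {z. fst z \<in> D} z \<partial>measure_pmf (Q n))"
    by (intro nn_integral_mono) (auto simp: indicator_def ennreal_leI intro: add_increasing2)
  also have "\<dots> = (\<integral>\<^sup>+ w. ?tail w \<partial>measure_pmf (map_pmf ?Z (Q n)))
      + ennreal u * emeasure (measure_pmf (Q n)) {z. fst z \<in> D}"
    by (simp add: nn_integral_add nn_integral_cmult_indicator)
  also have "(\<integral>\<^sup>+ w. ?tail w \<partial>measure_pmf (map_pmf ?Z (Q n))) \<le> ui_tail Q u"
    unfolding ui_tail_def by (rule SUP_upper) (use assms(1) in simp)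
  finally show ?thesis by (simp add: mult_left_mono add_right_mono)
qed

lemma nn_integral_cond_info_component_le:
  assumes "\<And>z. \<alpha> * pmf (Q n) z \<le> pmf q z" "\<alpha> > 0" "n \<ge> 1" "u \<ge> 0"
  shows "ennreal \<alpha> * (\<integral>\<^sup>+ z. indicator D (fst z) * ennreal (cond_info (Q n) (fst z) (snd z)) \<partial>measure_pmf (Q n))
    \<le> of_nat n * (ennreal \<alpha> * ui_tail Q u) + of_nat n * ennreal u * emeasure (measure_pmf q) {z. fst z \<in> D}"
proof -
  let ?W = "\<lambda>r. emeasure (measure_pmf r) {z. fst z \<in> D}"
  have "ennreal \<alpha> * (\<integral>\<^sup>+ z. indicator D (fst z) * ennreal (cond_info (Q n) (fst z) (snd z)) \<partial>measure_pmf (Q n))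
      \<le> ennreal \<alpha> * (of_nat n * (ui_tail Q u + ennreal u * ?W (Q n)))"
    by (intro mult_left_mono nn_integral_cond_info_le_ui_tail assms) simp
  also have "\<dots> = of_nat n * (ennreal \<alpha> * ui_tail Q u) + of_nat n * ennreal u * (ennreal \<alpha> * ?W (Q n))"
    by (simp add: algebra_simps)
  also have "\<dots> \<le> of_nat n * (ennreal \<alpha> * ui_tail Q u) + of_nat n * ennreal u * ?W q"
    by (intro add_left_mono mult_left_mono emeasure_dominated_le assms) simp
  finally show ?thesis .
qed

lemma nn_integral_cond_info_bad_words_le:
  fixes P P1 P2 :: "('a, 'b) source"
  assumes mix: "pmf_mixture (P n) (P1 n) (P2 n) \<alpha>1 \<alpha>2" and "n \<ge> 1" "\<epsilon> > 0" "u \<ge> 0"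
  shows "(\<integral>\<^sup>+ z. indicator (pmf_mixture.bad_words (P n) (P1 n) (P2 n) \<alpha>1 \<alpha>2 \<epsilon> c) (fst z)
              * ennreal (cond_info (P n) (fst z) (snd z)) \<partial>measure_pmf (P n))
    \<le> of_nat n * (ennreal \<alpha>1 * ui_tail P1 u + ennreal \<alpha>2 * ui_tail P2 u)
      + ennreal (8 * real n * u / (\<epsilon> * 2 powr c) + 2 / ln 2)"
proof -
  interpret pmf_mixture "P n" "P1 n" "P2 n" \<alpha>1 \<alpha>2 by (rule mix)
  let ?D = "bad_words \<epsilon> c"
  let ?I = "\<lambda>Q. \<integral>\<^sup>+ z. indicator ?D (fst z) * ennreal (cond_info (Q n) (fst z) (snd z)) \<partial>measure_pmf (Q n)"
  let ?W = "\<lambda>Q. emeasure (measure_pmf (Q n)) {z. fst z \<in> ?D}"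
  have "2 * (of_nat n * ennreal u * ?W P) \<le> 2 * (of_nat n * ennreal u * ennreal (4 / (\<epsilon> * 2 powr c)))"
    by (intro mult_left_mono emeasure_bad_words_le assms) simp_all
  also have "\<dots> = ennreal (8 * real n * u / (\<epsilon> * 2 powr c))"
    using assms by (simp add: ennreal_of_nat_eq_real_of_nat numeral_mult_ennreal flip: ennreal_mult)
  finally have bad_mass: "2 * (of_nat n * ennreal u * ?W P) \<le> ennreal (8 * real n * u / (\<epsilon> * 2 powr c))" .
  have "?I P \<le> ennreal \<alpha>1 * ?I P1 + ennreal \<alpha>2 * ?I P2 + ennreal (2 / ln 2)"
    by (rule nn_integral_cond_info_le)
  also have "\<dots> \<le> of_nat n * (ennreal \<alpha>1 * ui_tail P1 u) + of_nat n * ennreal u * ?W P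
      + (of_nat n * (ennreal \<alpha>2 * ui_tail P2 u) + of_nat n * ennreal u * ?W P) + ennreal (2 / ln 2)"
    by (intro add_mono nn_integral_cond_info_component_le dominates1 dominates2 \<alpha>1_pos \<alpha>2_pos
        assms order.refl)
  also have "\<dots> = of_nat n * (ennreal \<alpha>1 * ui_tail P1 u + ennreal \<alpha>2 * ui_tail P2 u)
      + 2 * (of_nat n * ennreal u * ?W P) + ennreal (2 / ln 2)"
    by (simp only: distrib_left mult_2 add_ac)
  also have "\<dots> \<le> of_nat n * (ennreal \<alpha>1 * ui_tail P1 u + ennreal \<alpha>2 * ui_tail P2 u)
      + ennreal (8 * real n * u / (\<epsilon> * 2 powr c)) + ennreal (2 / ln 2)"
    by (intro add_mono bad_mass order.refl)
  finally show ?thesis using assms by (simp add: add.assoc)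
qed

text \<open>The per-letter cost for block length \<open>n\<close> and \<open>c = n\<gamma>\<close>: the shift \<open>1 + c\<close> of the
  quantile on good words, and on bad words the mass term \<open>8nu / (\<epsilon> 2\<^sup>c)\<close> of the
  uniform-integrability split together with the log-ratio correction \<open>2 / ln 2\<close>.\<close>

definition error_term :: "real \<Rightarrow> real \<Rightarrow> real \<Rightarrow> nat \<Rightarrow> real" where
  "error_term \<epsilon> \<gamma> u n
     = (1 + real n * \<gamma> + (8 * real n * u / (\<epsilon> * 2 powr (real n * \<gamma>)) + 2 / ln 2) / \<epsilon>) / real n"

lemma Hs_eps_le_Hmax_eps_plus:
  fixes P P1 P2 :: "('a::countable, 'b::countable) source"
  assumes "is_source P1" "is_source P2" and mix: "pmf_mixture (P n) (P1 n) (P2 n) \<alpha>1 \<alpha>2"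
    and "n \<ge> 1" "0 < \<epsilon>" "\<epsilon> < 1" "\<gamma> \<ge> 0" "u \<ge> 0"
  shows "Hs_eps \<epsilon> P n / of_nat n \<le> Hmax_eps (\<epsilon>/2) P P1 P2 n / of_nat n
      + (ennreal \<alpha>1 * ui_tail P1 u + ennreal \<alpha>2 * ui_tail P2 u) / ennreal \<epsilon> + ennreal (error_term \<epsilon> \<gamma> u n)"
proof -
  interpret pmf_mixture "P n" "P1 n" "P2 n" \<alpha>1 \<alpha>2 by (rule mix)
  define c where "c = real n * \<gamma>"
  define X where "X = ennreal \<alpha>1 * ui_tail P1 u + ennreal \<alpha>2 * ui_tail P2 u"
  define R where "R = 8 * real n * u / (\<epsilon> * 2 powr c) + 2 / ln 2"
  have "c \<ge> 0" "R \<ge> 0" using assms by (simp_all add: c_def R_def)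
  have "Hs_eps \<epsilon> P n \<le> Hmax_eps (\<epsilon>/2) P P1 P2 n + ennreal (1 + c)
      + (\<integral>\<^sup>+ z. indicator (bad_words \<epsilon> c) (fst z) * ennreal (cond_info (P n) (fst z) (snd z)) \<partial>measure_pmf (P n))
        / ennreal \<epsilon>"
    unfolding Hs_eps_eq_nn_integral Hmax_eps_eq_nn_integral
    using assms(5,6) \<open>c \<ge> 0\<close> marg_fst_mixture_of_sources_pos[OF assms(1,2) mix]
    by (rule nn_integral_info_quantile_le)
  also have "\<dots> \<le> Hmax_eps (\<epsilon>/2) P P1 P2 n + ennreal (1 + c) + (of_nat n * X + ennreal R) / ennreal \<epsilon>"
    unfolding X_def R_def
    by (intro add_left_mono divide_right_mono_ennreal nn_integral_cond_info_bad_words_le mix assms)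
  also have "\<dots> = Hmax_eps (\<epsilon>/2) P P1 P2 n + of_nat n * (X / ennreal \<epsilon>) + ennreal (1 + c + R / \<epsilon>)"
    using assms \<open>c \<ge> 0\<close> \<open>R \<ge> 0\<close>
    by (simp add: add_divide_distrib_ennreal ennreal_times_divide divide_ennreal ac_simps)
  finally have "Hs_eps \<epsilon> P n / of_nat n
      \<le> (Hmax_eps (\<epsilon>/2) P P1 P2 n + of_nat n * (X / ennreal \<epsilon>) + ennreal (1 + c + R / \<epsilon>)) / of_nat n"
    by (rule divide_right_mono_ennreal)
  also have "\<dots> = Hmax_eps (\<epsilon>/2) P P1 P2 n / of_nat n + X / ennreal \<epsilon> + ennreal (1 + c + R / \<epsilon>) / of_nat n"
    using assms(4) by (simp add: add_divide_distrib_ennreal mult.commute[of "of_nat n"] mult_divide_eq_ennreal)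
  also have "ennreal (1 + c + R / \<epsilon>) / of_nat n = ennreal (error_term \<epsilon> \<gamma> u n)"
    unfolding ennreal_of_nat_eq_real_of_nat using assms \<open>c \<ge> 0\<close> \<open>R \<ge> 0\<close>
    by (subst divide_ennreal) (simp_all add: error_term_def R_def c_def)
  finally show ?thesis by (simp add: X_def)
qed

lemma error_term_tendsto:
  assumes "\<gamma> > 0" "\<epsilon> > 0"
  shows "(\<lambda>n. error_term \<epsilon> \<gamma> u n) \<longlonglongrightarrow> \<gamma>"
proof -
  define b where "b = 2 powr \<gamma>"
  have "b > 1" unfolding b_def using assms(1) by simp
  have power: "2 powr (real n * \<gamma>) = b ^ n" for n
  proof -
    have "2 powr (real n * \<gamma>) = (2 powr \<gamma>) powr real n" by (simp add: powr_powr mult.commute)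
    also have "\<dots> = b ^ n" unfolding b_def by (rule powr_realpow) simp
    finally show ?thesis .
  qed
  have eq: "error_term \<epsilon> \<gamma> u n = (1 + 2 / (ln 2 * \<epsilon>)) / real n + \<gamma> + 8 * u / (\<epsilon> * \<epsilon>) * inverse (b ^ n)"
    if "n \<ge> 1" for n
  proof -
    have "real n > 0" "b ^ n > 0" using that \<open>b > 1\<close> by auto
    then show ?thesis using assms(2) unfolding error_term_def power by (simp add: field_simps)
  qed
  have "(\<lambda>n. (1 + 2 / (ln 2 * \<epsilon>)) / real n + \<gamma> + 8 * u / (\<epsilon> * \<epsilon>) * inverse (b ^ n))
      \<longlonglongrightarrow> 0 + \<gamma> + 8 * u / (\<epsilon> * \<epsilon>) * 0"
    by (intro tendsto_intros lim_const_over_n LIMSEQ_inverse_realpow_zero \<open>b > 1\<close>)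
  then have "(\<lambda>n. (1 + 2 / (ln 2 * \<epsilon>)) / real n + \<gamma> + 8 * u / (\<epsilon> * \<epsilon>) * inverse (b ^ n))
      \<longlonglongrightarrow> \<gamma>"
    by simp
  then show ?thesis
    by (rule Lim_transform_eventually) (auto simp: eventually_sequentially eq intro!: exI[of _ 1])
qed

lemma ex_weighted_ui_tails_le:
  assumes "unif_integrable P1" "unif_integrable P2" "\<alpha>1 > 0" "\<alpha>2 > 0" "\<alpha>1 + \<alpha>2 = 1"
    and "\<epsilon> > 0" "t > 0"
  shows "\<exists>u \<ge> 0. (ennreal \<alpha>1 * ui_tail P1 u + ennreal \<alpha>2 * ui_tail P2 u) / ennreal \<epsilon> \<le> ennreal t"
proof -
  have "eventually (\<lambda>u. ui_tail P1 u < ennreal (t * \<epsilon>) \<and> ui_tail P2 u < ennreal (t * \<epsilon>)) at_top"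
    using assms unfolding unif_integrable_def ui_tail_def[symmetric]
    by (intro eventually_conj order_tendstoD(2)) auto
  then obtain u0 where "\<And>u. u \<ge> u0 \<Longrightarrow> ui_tail P1 u < ennreal (t * \<epsilon>) \<and> ui_tail P2 u < ennreal (t * \<epsilon>)"
    by (auto simp: eventually_at_top_linorder)
  then obtain u where "u \<ge> 0" and tails: "ui_tail P1 u \<le> ennreal (t * \<epsilon>)" "ui_tail P2 u \<le> ennreal (t * \<epsilon>)"
    by (metis less_imp_le max.cobounded1 max.cobounded2)
  have "ennreal \<alpha>1 * ui_tail P1 u + ennreal \<alpha>2 * ui_tail P2 u
      \<le> ennreal \<alpha>1 * ennreal (t * \<epsilon>) + ennreal \<alpha>2 * ennreal (t * \<epsilon>)"
    by (intro add_mono mult_left_mono tails) simp_all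
  also have "\<dots> = ennreal (t * \<epsilon>)"
    using assms by (simp add: ring_distribs(2)[symmetric] flip: ennreal_mult ennreal_plus)
  finally have "(ennreal \<alpha>1 * ui_tail P1 u + ennreal \<alpha>2 * ui_tail P2 u) / ennreal \<epsilon>
      \<le> ennreal (t * \<epsilon>) / ennreal \<epsilon>"
    by (rule divide_right_mono_ennreal)
  also have "\<dots> = ennreal t" using assms(6,7) by (simp add: divide_ennreal)
  finally show ?thesis using \<open>u \<ge> 0\<close> by blast
qed

lemma limsup_Hs_eps_le:
  fixes P P1 P2 :: "('a::countable, 'b::countable) source"
  assumes "is_source P1" "is_source P2" "unif_integrable P1" "unif_integrable P2"
    and mix: "\<And>n. pmf_mixture (P n) (P1 n) (P2 n) \<alpha>1 \<alpha>2" and "0 < \<epsilon>" "\<epsilon> < 1"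
  shows "limsup (\<lambda>n. Hs_eps \<epsilon> P n / of_nat n) \<le> limsup (\<lambda>n. Hmax_eps (\<epsilon>/2) P P1 P2 n / of_nat n)"
proof (rule ennreal_le_epsilon)
  fix \<theta> :: real assume "\<theta> > 0"
  define t where "t = \<theta> / 3"
  have "t > 0" using \<open>\<theta> > 0\<close> by (simp add: t_def)
  have "\<alpha>1 > 0" "\<alpha>2 > 0" "\<alpha>1 + \<alpha>2 = 1"
    using pmf_mixture.\<alpha>1_pos[OF mix] pmf_mixture.\<alpha>2_pos[OF mix] pmf_mixture.\<alpha>_sum[OF mix] by auto
  then obtain u where "u \<ge> 0" and weighted_tails:
    "(ennreal \<alpha>1 * ui_tail P1 u + ennreal \<alpha>2 * ui_tail P2 u) / ennreal \<epsilon> \<le> ennreal t"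
    using ex_weighted_ui_tails_le[OF assms(3,4)] \<open>t > 0\<close> assms(6) by blast
  have "eventually (\<lambda>n. error_term \<epsilon> t u n < 2 * t) sequentially"
    using \<open>t > 0\<close> by (intro order_tendstoD(2)[OF error_term_tendsto] assms) simp_all
  then have "eventually (\<lambda>n. Hs_eps \<epsilon> P n / of_nat n \<le> ennreal \<theta> + Hmax_eps (\<epsilon>/2) P P1 P2 n / of_nat n)
      sequentially"
    using eventually_ge_at_top[of "1::nat"]
  proof eventually_elim
    case (elim n)
    have "Hs_eps \<epsilon> P n / of_nat n \<le> Hmax_eps (\<epsilon>/2) P P1 P2 n / of_nat n
        + (ennreal \<alpha>1 * ui_tail P1 u + ennreal \<alpha>2 * ui_tail P2 u) / ennreal \<epsilon> + ennreal (error_term \<epsilon> t u n)"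
      using assms(1,2) mix elim(2) assms(6,7) \<open>t > 0\<close> \<open>u \<ge> 0\<close> by (intro Hs_eps_le_Hmax_eps_plus) auto
    also have "\<dots> \<le> Hmax_eps (\<epsilon>/2) P P1 P2 n / of_nat n + ennreal t + ennreal (2 * t)"
      using elim(1) by (intro add_mono order.refl weighted_tails ennreal_leI) simp
    also have "\<dots> = ennreal \<theta> + Hmax_eps (\<epsilon>/2) P P1 P2 n / of_nat n"
      using \<open>t > 0\<close> by (simp add: t_def ac_simps flip: ennreal_plus)
    finally show ?case .
  qed
  then have "limsup (\<lambda>n. Hs_eps \<epsilon> P n / of_nat n)
      \<le> limsup (\<lambda>n. ennreal \<theta> + Hmax_eps (\<epsilon>/2) P P1 P2 n / of_nat n)"
    by (rule Limsup_mono)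
  then show "limsup (\<lambda>n. Hs_eps \<epsilon> P n / of_nat n)
      \<le> limsup (\<lambda>n. Hmax_eps (\<epsilon>/2) P P1 P2 n / of_nat n) + ennreal \<theta>"
    by (simp add: Limsup_const_add add.commute)
qed

lemma Hs_eps_antimono:
  fixes P :: "('a::countable, 'b::countable) source"
  assumes "0 < \<epsilon>" "\<epsilon> \<le> \<epsilon>'" "\<epsilon>' < 1"
  shows "Hs_eps \<epsilon>' P n \<le> Hs_eps \<epsilon> P n"
  unfolding Hs_eps_eq_nn_integral
proof (intro nn_integral_mono)
  fix x
  show "ennreal (marg_fst (P n) x) * ennreal (info_quantile \<epsilon>' (P n) x)
      \<le> ennreal (marg_fst (P n) x) * ennreal (info_quantile \<epsilon> (P n) x)"
  proof (cases "marg_fst (P n) x > 0")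
    case True
    then show ?thesis using assms by (intro mult_left_mono ennreal_leI info_quantile_antimono) auto
  qed (simp add: order.strict_iff_order)
qed

lemma Hmax_eps_antimono:
  fixes P P1 P2 :: "('a::countable, 'b::countable) source"
  assumes "is_source P1" "is_source P2" "pmf_mixture (P n) (P1 n) (P2 n) \<alpha>1 \<alpha>2"
    and "0 < \<epsilon>" "\<epsilon> \<le> \<epsilon>'" "\<epsilon>' < 1"
  shows "Hmax_eps \<epsilon>' P P1 P2 n \<le> Hmax_eps \<epsilon> P P1 P2 n"
  unfolding Hmax_eps_eq_nn_integral
proof (intro nn_integral_mono)
  fix x
  show "ennreal (marg_fst (P n) x) * ennreal (max (info_quantile \<epsilon>' (P1 n) x) (info_quantile \<epsilon>' (P2 n) x))
      \<le> ennreal (marg_fst (P n) x) * ennreal (max (info_quantile \<epsilon> (P1 n) x) (info_quantile \<epsilon> (P2 n) x))"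
  proof (cases "marg_fst (P n) x > 0")
    case True
    with marg_fst_mixture_of_sources_pos[OF assms(1-3)]
    have "marg_fst (P1 n) x > 0" "marg_fst (P2 n) x > 0" by auto
    then show ?thesis
      using assms(4-6) by (intro mult_left_mono ennreal_leI max.mono info_quantile_antimono) auto
  qed (simp add: order.strict_iff_order)
qed

lemma tendsto_at_right_0_SUP_antimono:
  fixes h :: "real \<Rightarrow> 'a::{complete_linorder, linorder_topology}"
  assumes antimono: "\<And>a b. 0 < a \<Longrightarrow> a \<le> b \<Longrightarrow> b < 1 \<Longrightarrow> h b \<le> h a"
  shows "(h \<longlongrightarrow> (SUP e\<in>{0<..<1}. h e)) (at_right 0)"
proof (rule order_tendstoI)
  fix a assume "a < (SUP e\<in>{0<..<1}. h e)"
  then obtain e0 where e0: "0 < e0" "e0 < 1" "a < h e0" by (auto simp: less_SUP_iff)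
  have "a < h x" if "0 < x" "x < e0" for x
    using e0 antimono[of x e0] that by (simp add: less_le_trans)
  then show "eventually (\<lambda>x. a < h x) (at_right 0)"
    unfolding eventually_at_right[OF zero_less_one] using e0(1) by (intro exI[of _ e0]) simp
next
  fix a assume "(SUP e\<in>{0<..<1}. h e) < a"
  then have "h x < a" if "0 < x" "x < 1" for x
    using SUP_upper[of x "{0<..<1}" h] that by (simp add: le_less_trans)
  then show "eventually (\<lambda>x. h x < a) (at_right 0)"
    unfolding eventually_at_right[OF zero_less_one] by (intro exI[of _ 1]) simp
qed

theorem theorem12:
  fixes P P1 P2 :: "('a::countable, 'b::countable) source"
    and \<alpha>1 \<alpha>2 :: real
  assumes "is_source P1" and "is_source P2"
    and "unif_integrable P1" and "unif_integrable P2"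
    and "\<alpha>1 > 0" and "\<alpha>2 > 0" and "\<alpha>1 + \<alpha>2 = 1"
    and "\<And>n xy. pmf (P n) xy = \<alpha>1 * pmf (P1 n) xy + \<alpha>2 * pmf (P2 n) xy"
  shows "Hs_bar P \<le>
    Lim (at_right 0) (\<lambda>\<epsilon>::real. limsup (\<lambda>n. Hmax_eps \<epsilon> P P1 P2 n / of_nat n))"
proof -
  have mix: "pmf_mixture (P n) (P1 n) (P2 n) \<alpha>1 \<alpha>2" for n
    using assms(5-8) by unfold_locales
  define f where "f \<epsilon> = limsup (\<lambda>n. Hs_eps \<epsilon> P n / of_nat n)" for \<epsilon>
  define g where "g \<epsilon> = limsup (\<lambda>n. Hmax_eps \<epsilon> P P1 P2 n / of_nat n)" for \<epsilon>
  have "Lim (at_right 0) f = (SUP \<epsilon>\<in>{0<..<1}. f \<epsilon>)"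
    unfolding f_def
    by (intro tendsto_Lim tendsto_at_right_0_SUP_antimono Limsup_mono always_eventually allI
        divide_right_mono_ennreal Hs_eps_antimono) auto
  moreover have "Lim (at_right 0) g = (SUP \<epsilon>\<in>{0<..<1}. g \<epsilon>)"
    unfolding g_def using assms(1,2) mix
    by (intro tendsto_Lim tendsto_at_right_0_SUP_antimono Limsup_mono always_eventually allI
        divide_right_mono_ennreal Hmax_eps_antimono) auto
  moreover have "f \<epsilon> \<le> (SUP \<epsilon>\<in>{0<..<1}. g \<epsilon>)" if "0 < \<epsilon>" "\<epsilon> < 1" for \<epsilon>
    using limsup_Hs_eps_le[OF assms(1-4) mix that] SUP_upper[of "\<epsilon>/2" "{0<..<1}" g] that
    unfolding f_def g_def by auto
  ultimately show ?thesis
    unfolding Hs_bar_def f_def[abs_def, symmetric] g_def[abs_def, symmetric] by (auto intro: SUP_least)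
qed

end
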